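(* Let $(G,E)$ be a connected simple graph and $d,\rho$ metrics on $G$ such that $d$ is quasisymmetric to $\rho$. If $d$ fits to $(G,E)$, then $\rho$ fits to $(G,E)$.
   Context: $d$ is quasisymmetric to $\rho$ if there is a homeomorphism $\theta:[0,\infty)\to[0,\infty)$ with $\rho(x,y)/\rho(x,z)\le\theta(d(x,y)/d(x,z))$ for all $x,y,z$ with $x\ne z$. A metric $d$ fits to $(G,E)$ if (F1) there is $C>0$ with $d(x,y)\le Cd(x,z)$ for all $x,y,z$ with $x\sim y$ and $x\ne z$; and (F2) for every $\epsilon>0$ there exist $r>0$, $n\ge1$ and $x_0,\dots,x_n\in G$ with $x_i\in B_d(x_0,r)$ for $i\in[0,n-1]$, $x_n\notin B_d(x_0,r)$, and $d(x_i,x_{i-1})\le\epsilon r$, $x_i\sim x_{i-1}$ for $i\in[1,n]$. *)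

theory Defs
  imports "HOL-Analysis.Analysis"
begin

definition simple_graph :: "'a set \<Rightarrow> ('a \<Rightarrow> 'a \<Rightarrow> bool) \<Rightarrow> bool" where
  "simple_graph G E \<longleftrightarrow>
     (\<forall>x y. E x y \<longrightarrow> x \<in> G \<and> y \<in> G) \<and>
     (\<forall>x y. E x y \<longrightarrow> E y x) \<and>
     (\<forall>x. \<not> E x x)"

definition connected_graph :: "'a set \<Rightarrow> ('a \<Rightarrow> 'a \<Rightarrow> bool) \<Rightarrow> bool" where
  "connected_graph G E \<longleftrightarrow> (\<forall>x\<in>G. \<forall>y\<in>G. E\<^sup>*\<^sup>* x y)"

definition metric_on :: "'a set \<Rightarrow> ('a \<Rightarrow> 'a \<Rightarrow> real) \<Rightarrow> bool" where
  "metric_on G d \<longleftrightarrow>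
     (\<forall>x\<in>G. \<forall>y\<in>G. 0 \<le> d x y) \<and>
     (\<forall>x\<in>G. \<forall>y\<in>G. d x y = 0 \<longleftrightarrow> x = y) \<and>
     (\<forall>x\<in>G. \<forall>y\<in>G. d x y = d y x) \<and>
     (\<forall>x\<in>G. \<forall>y\<in>G. \<forall>z\<in>G. d x z \<le> d x y + d y z)"

definition quasisymmetric_to :: "'a set \<Rightarrow> ('a \<Rightarrow> 'a \<Rightarrow> real) \<Rightarrow> ('a \<Rightarrow> 'a \<Rightarrow> real) \<Rightarrow> bool" where
  "quasisymmetric_to G d \<rho> \<longleftrightarrow>
     (\<exists>\<theta> :: real \<Rightarrow> real. (\<exists>\<theta>'. homeomorphism {0..} {0..} \<theta> \<theta>') \<and>
        (\<forall>x\<in>G. \<forall>y\<in>G. \<forall>z\<in>G. x \<noteq> z \<longrightarrow> \<rho> x y / \<rho> x z \<le> \<theta> (d x y / d x z)))"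

definition fits :: "'a set \<Rightarrow> ('a \<Rightarrow> 'a \<Rightarrow> bool) \<Rightarrow> ('a \<Rightarrow> 'a \<Rightarrow> real) \<Rightarrow> bool" where
  "fits G E d \<longleftrightarrow>
     (\<exists>C>0. \<forall>x\<in>G. \<forall>y\<in>G. \<forall>z\<in>G. E x y \<and> x \<noteq> z \<longrightarrow> d x y \<le> C * d x z) \<and>
     (\<forall>\<epsilon>>0. \<exists>r>0. \<exists>n\<ge>1. \<exists>xs :: nat \<Rightarrow> 'a.
        (\<forall>i\<le>n. xs i \<in> G) \<and>
        (\<forall>i<n. d (xs 0) (xs i) < r) \<and>
        \<not> (d (xs 0) (xs n) < r) \<and>
        (\<forall>i\<in>{1..n}. d (xs i) (xs (i - 1)) \<le> \<epsilon> * r \<and> E (xs i) (xs (i - 1))))"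

end

theory Submission
  imports Defs
begin

text \<open>Quasisymmetry only enters through two properties of \<open>\<theta>\<close>: it is bounded on compact intervals,
  which transfers (F1), and \<open>\<theta> t \<rightarrow> 0\<close> as \<open>t \<rightarrow> 0\<close>, so \<open>d\<close>-small ratios are \<open>\<rho>\<close>-small ratios.
  For (F2), take a \<open>d\<close>-chain leaving \<open>B\<^sub>d(x\<^sub>0, r)\<close> with steps much shorter than \<open>r\<close> and stop it at
  its first exit from \<open>B\<^sub>\<rho>(x\<^sub>0, R)\<close>, \<open>R = \<rho>(x\<^sub>0, x\<^sub>n)\<close>. Every vertex \<open>x\<^sub>j\<close> before the exit has
  \<open>d\<close>-distance at least \<open>r/2\<close> from \<open>x\<^sub>0\<close> or \<open>x\<^sub>n\<close>, say \<open>z\<close>, so the next step is \<open>d\<close>-small compared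
  with \<open>d(x\<^sub>j, z)\<close>, hence \<open>\<rho>\<close>-small compared with \<open>\<rho>(x\<^sub>j, z) \<le> 2R\<close>.\<close>

lemma homeomorphism_nonneg_reals_fixes_zero:
  fixes \<theta> \<theta>' :: "real \<Rightarrow> real"
  assumes hom: "homeomorphism {0..} {0..} \<theta> \<theta>'"
  shows "\<theta> 0 = 0"
proof (rule ccontr)
  assume "\<theta> 0 \<noteq> 0"
  have cont: "continuous_on {0..b} \<theta>" for b
    using homeomorphism_cont1[OF hom] by (rule continuous_on_subset) auto
  have inj: "inj_on \<theta> {0..b}" for b
    by (rule inj_on_inverseI[of _ \<theta>']) (use homeomorphism_apply1[OF hom] in auto)
  have onto: "\<exists>s\<ge>0. \<theta> s = y" if "y \<ge> 0" for y
    using homeomorphism_image1[OF hom] that by force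
  have "\<theta> 0 \<in> {0..}"
    using homeomorphism_image1[OF hom] by blast
  with \<open>\<theta> 0 \<noteq> 0\<close> have pos: "\<theta> 0 > 0" by simp
  obtain s where s: "s \<ge> 0" "\<theta> s = 0" using onto by blast
  obtain t where t: "t \<ge> 0" "\<theta> t = \<theta> 0 + 1" using onto[of "\<theta> 0 + 1"] pos by auto
  have "s > 0" "t > 0" "s \<noteq> t"
    using s t pos by (auto simp: order_le_less)
  then consider "0 < s" "s < t" | "0 < t" "t < s" by linarith
  then show False
  proof cases
    case 1
    then show False
      using continuous_inj_imp_mono[OF 1 cont inj] s t pos by linarith
  next
    case 2
    then show False
      using continuous_inj_imp_mono[OF 2 cont inj] s t pos by linarith
  qed
qed

lemma metric_on_nonneg: "metric_on G d \<Longrightarrow> x \<in> G \<Longrightarrow> y \<in> G \<Longrightarrow> 0 \<le> d x y"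
  by (simp add: metric_on_def)

lemma metric_on_eq_0_iff: "metric_on G d \<Longrightarrow> x \<in> G \<Longrightarrow> y \<in> G \<Longrightarrow> d x y = 0 \<longleftrightarrow> x = y"
  by (simp add: metric_on_def)

lemma metric_on_pos: "metric_on G d \<Longrightarrow> x \<in> G \<Longrightarrow> y \<in> G \<Longrightarrow> x \<noteq> y \<Longrightarrow> 0 < d x y"
  using metric_on_nonneg[of G d x y] metric_on_eq_0_iff[of G d x y] by simp

lemma metric_on_sym: "metric_on G d \<Longrightarrow> x \<in> G \<Longrightarrow> y \<in> G \<Longrightarrow> d x y = d y x"
  by (simp add: metric_on_def)

lemma metric_on_triangle:
  "metric_on G d \<Longrightarrow> x \<in> G \<Longrightarrow> y \<in> G \<Longrightarrow> z \<in> G \<Longrightarrow> d x z \<le> d x y + d y z"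
  by (simp add: metric_on_def)

lemma metric_on_far_endpoint:
  assumes "metric_on G d" "x \<in> G" "y \<in> G" "w \<in> G" "r \<le> d x w"
  obtains z where "z = x \<or> z = w" "r / 2 \<le> d y z"
proof -
  have "d x w \<le> d y x + d y w"
    using metric_on_triangle[OF assms(1,2,3,4)] metric_on_sym[OF assms(1,2,3)] by simp
  then have "r / 2 \<le> d y x \<or> r / 2 \<le> d y w"
    using assms(5) by linarith
  then show ?thesis
    using that by blast
qed

lemma quasisymmetric_toD:
  assumes "quasisymmetric_to G d \<rho>"
  shows "\<exists>\<theta>. continuous_on {0..} \<theta> \<and> \<theta> 0 = 0 \<and>
           (\<forall>x\<in>G. \<forall>y\<in>G. \<forall>z\<in>G. x \<noteq> z \<longrightarrow> \<rho> x y / \<rho> x z \<le> \<theta> (d x y / d x z))"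
proof -
  obtain \<theta> \<theta>' where hom: "homeomorphism {0..} {0..} \<theta> \<theta>'"
    and "\<forall>x\<in>G. \<forall>y\<in>G. \<forall>z\<in>G. x \<noteq> z \<longrightarrow> \<rho> x y / \<rho> x z \<le> \<theta> (d x y / d x z)"
    using assms unfolding quasisymmetric_to_def by blast
  with homeomorphism_cont1[OF hom] homeomorphism_nonneg_reals_fixes_zero[OF hom] show ?thesis
    by blast
qed

lemma quasisymmetric_to_bounded_ratio:
  assumes d: "metric_on G d" and \<rho>: "metric_on G \<rho>" and qs: "quasisymmetric_to G d \<rho>"
  obtains K where "K > 0"
    "\<And>x y z. x \<in> G \<Longrightarrow> y \<in> G \<Longrightarrow> z \<in> G \<Longrightarrow> x \<noteq> z \<Longrightarrow> d x y \<le> C * d x z \<Longrightarrow> \<rho> x y \<le> K * \<rho> x z"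
proof -
  obtain \<theta> where cont: "continuous_on {0..} \<theta>"
    and \<theta>: "\<forall>x\<in>G. \<forall>y\<in>G. \<forall>z\<in>G. x \<noteq> z \<longrightarrow> \<rho> x y / \<rho> x z \<le> \<theta> (d x y / d x z)"
    using quasisymmetric_toD[OF qs] by blast
  have "compact (\<theta> ` {0..C})"
    by (intro compact_continuous_image continuous_on_subset[OF cont]) auto
  then have "bounded (\<theta> ` {0..C})"
    by (rule compact_imp_bounded)
  then obtain M where "\<forall>y\<in>\<theta> ` {0..C}. \<bar>y\<bar> \<le> M"
    unfolding bounded_real by blast
  then have M: "\<theta> t \<le> M" if "t \<in> {0..C}" for t
    using that by (simp add: abs_le_iff)
  show ?thesis
  proof (rule that[of "max M 1"])
    fix x y z assume xyz: "x \<in> G" "y \<in> G" "z \<in> G" "x \<noteq> z" and "d x y \<le> C * d x z"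
    moreover have "0 < d x z" "0 < \<rho> x z"
      using metric_on_pos[OF d] metric_on_pos[OF \<rho>] xyz by auto
    ultimately have "d x y / d x z \<in> {0..C}"
      using metric_on_nonneg[OF d xyz(1,2)] by (simp add: field_simps)
    then have "\<rho> x y / \<rho> x z \<le> M"
      using \<theta>[rule_format, OF xyz] M by (meson order_trans)
    with \<open>0 < \<rho> x z\<close> have "\<rho> x y \<le> M * \<rho> x z"
      by (simp add: pos_divide_le_eq)
    also have "\<dots> \<le> max M 1 * \<rho> x z"
      using \<open>0 < \<rho> x z\<close> by (intro mult_right_mono) auto
    finally show "\<rho> x y \<le> max M 1 * \<rho> x z" .
  qed simp
qed

lemma quasisymmetric_to_small_ratio:
  assumes d: "metric_on G d" and \<rho>: "metric_on G \<rho>" and qs: "quasisymmetric_to G d \<rho>"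
    and "\<epsilon> > 0"
  obtains \<eta> where "\<eta> > 0"
    "\<And>x y z. x \<in> G \<Longrightarrow> y \<in> G \<Longrightarrow> z \<in> G \<Longrightarrow> x \<noteq> z \<Longrightarrow> d x y \<le> \<eta> * d x z \<Longrightarrow> \<rho> x y \<le> \<epsilon> * \<rho> x z"
proof -
  obtain \<theta> where cont: "continuous_on {0..} \<theta>" and "\<theta> 0 = 0"
    and \<theta>: "\<forall>x\<in>G. \<forall>y\<in>G. \<forall>z\<in>G. x \<noteq> z \<longrightarrow> \<rho> x y / \<rho> x z \<le> \<theta> (d x y / d x z)"
    using quasisymmetric_toD[OF qs] by blast
  obtain \<delta> where "\<delta> > 0" and \<delta>': "\<forall>t\<in>{0..}. dist t 0 < \<delta> \<longrightarrow> dist (\<theta> t) (\<theta> 0) < \<epsilon>"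
    using cont \<open>\<epsilon> > 0\<close> unfolding continuous_on_iff by (meson atLeast_iff order_refl)
  have \<delta>: "\<theta> t < \<epsilon>" if "0 \<le> t" "t < \<delta>" for t
    using \<delta>'[rule_format, of t] \<open>\<theta> 0 = 0\<close> that by (simp add: dist_real_def abs_less_iff)
  show ?thesis
  proof (rule that[of "\<delta> / 2"])
    fix x y z assume xyz: "x \<in> G" "y \<in> G" "z \<in> G" "x \<noteq> z" and "d x y \<le> \<delta> / 2 * d x z"
    moreover have "0 < d x z" "0 < \<rho> x z"
      using metric_on_pos[OF d] metric_on_pos[OF \<rho>] xyz by auto
    ultimately have "0 \<le> d x y / d x z" "d x y / d x z \<le> \<delta> / 2"
      using metric_on_nonneg[OF d xyz(1,2)] by (simp_all add: field_simps)
    with \<open>\<delta> > 0\<close> have "\<theta> (d x y / d x z) < \<epsilon>"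
      by (intro \<delta>) linarith+
    then have "\<rho> x y / \<rho> x z \<le> \<epsilon>"
      using \<theta>[rule_format, OF xyz] by simp
    with \<open>0 < \<rho> x z\<close> show "\<rho> x y \<le> \<epsilon> * \<rho> x z"
      by (simp add: field_simps)
  qed (use \<open>\<delta> > 0\<close> in simp)
qed

definition escaping_chain ::
    "'a set \<Rightarrow> ('a \<Rightarrow> 'a \<Rightarrow> bool) \<Rightarrow> ('a \<Rightarrow> 'a \<Rightarrow> real) \<Rightarrow> real \<Rightarrow> real \<Rightarrow> nat \<Rightarrow> (nat \<Rightarrow> 'a) \<Rightarrow> bool"
  where "escaping_chain G E d \<epsilon> r n xs \<longleftrightarrow>
     (\<forall>i\<le>n. xs i \<in> G) \<and>
     (\<forall>i<n. d (xs 0) (xs i) < r) \<and>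
     \<not> (d (xs 0) (xs n) < r) \<and>
     (\<forall>i\<in>{1..n}. d (xs i) (xs (i - 1)) \<le> \<epsilon> * r \<and> E (xs i) (xs (i - 1)))"

lemma fits_iff_escaping_chains:
  "fits G E d \<longleftrightarrow>
     (\<exists>C>0. \<forall>x\<in>G. \<forall>y\<in>G. \<forall>z\<in>G. E x y \<and> x \<noteq> z \<longrightarrow> d x y \<le> C * d x z) \<and>
     (\<forall>\<epsilon>>0. \<exists>r>0. \<exists>n\<ge>1. \<exists>xs. escaping_chain G E d \<epsilon> r n xs)"
  unfolding fits_def escaping_chain_def ..

lemma escaping_chain_transfer:
  assumes d: "metric_on G d" and \<rho>: "metric_on G \<rho>" and "0 \<le> \<epsilon>" "0 < \<eta>" "0 < r"
    and small: "\<And>x y z. x \<in> G \<Longrightarrow> y \<in> G \<Longrightarrow> z \<in> G \<Longrightarrow> x \<noteq> z \<Longrightarrow>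
                  d x y \<le> \<eta> * d x z \<Longrightarrow> \<rho> x y \<le> \<epsilon> / 2 * \<rho> x z"
    and chain: "escaping_chain G E d (\<eta> / 2) r n xs"
  shows "\<exists>R>0. \<exists>m\<ge>1. escaping_chain G E \<rho> \<epsilon> R m xs"
proof -
  from chain have in_G: "\<And>i. i \<le> n \<Longrightarrow> xs i \<in> G"
    and leaves: "r \<le> d (xs 0) (xs n)"
    and steps: "\<And>i. i \<in> {1..n} \<Longrightarrow> d (xs i) (xs (i - 1)) \<le> \<eta> / 2 * r \<and> E (xs i) (xs (i - 1))"
    unfolding escaping_chain_def by auto
  have x0: "xs 0 \<in> G" and xn: "xs n \<in> G"
    using in_G by auto
  have "xs 0 \<noteq> xs n"
    using leaves \<open>0 < r\<close> metric_on_eq_0_iff[OF d x0 xn] by auto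
  define R where "R = \<rho> (xs 0) (xs n)"
  have "R > 0"
    unfolding R_def using metric_on_pos[OF \<rho> x0 xn \<open>xs 0 \<noteq> xs n\<close>] .
  obtain m where "m \<le> n" and before: "\<And>i. i < m \<Longrightarrow> \<rho> (xs 0) (xs i) < R"
    and exit: "R \<le> \<rho> (xs 0) (xs m)"
    using ex_least_nat_le[of "\<lambda>i. R \<le> \<rho> (xs 0) (xs i)" n] unfolding R_def by force
  have "m \<noteq> 0"
    using exit \<open>R > 0\<close> metric_on_eq_0_iff[OF \<rho> x0 x0] by (cases m) auto
  have step: "\<rho> (xs j) (xs (Suc j)) \<le> \<epsilon> * R" if "j < m" for j
  proof -
    have xj: "xs j \<in> G" and xj': "xs (Suc j) \<in> G"
      using in_G \<open>j < m\<close> \<open>m \<le> n\<close> by auto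
    obtain z where z: "z = xs 0 \<or> z = xs n" and far: "r / 2 \<le> d (xs j) z"
      using metric_on_far_endpoint[OF d x0 xj xn leaves] by blast
    have "z \<in> G"
      using z x0 xn by auto
    have "xs j \<noteq> z"
      using far \<open>0 < r\<close> metric_on_eq_0_iff[OF d xj \<open>z \<in> G\<close>] by auto
    have "d (xs j) (xs (Suc j)) \<le> \<eta> / 2 * r"
      using steps[of "Suc j"] \<open>j < m\<close> \<open>m \<le> n\<close> metric_on_sym[OF d xj xj'] by simp
    also have "\<dots> \<le> \<eta> * d (xs j) z"
      using far \<open>0 < \<eta>\<close> by simp
    finally have "\<rho> (xs j) (xs (Suc j)) \<le> \<epsilon> / 2 * \<rho> (xs j) z"
      using small xj xj' \<open>z \<in> G\<close> \<open>xs j \<noteq> z\<close> by blast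
    also have "\<dots> \<le> \<epsilon> / 2 * (2 * R)"
    proof (rule mult_left_mono)
      have "\<rho> (xs j) z \<le> \<rho> (xs j) (xs 0) + \<rho> (xs 0) z"
        using metric_on_triangle[OF \<rho> xj x0 \<open>z \<in> G\<close>] .
      moreover have "\<rho> (xs j) (xs 0) < R"
        using before[OF \<open>j < m\<close>] metric_on_sym[OF \<rho> x0 xj] by simp
      moreover have "\<rho> (xs 0) z \<le> R"
        using z \<open>R > 0\<close> metric_on_eq_0_iff[OF \<rho> x0 x0] unfolding R_def by auto
      ultimately show "\<rho> (xs j) z \<le> 2 * R"
        by linarith
    qed (use \<open>0 \<le> \<epsilon>\<close> in simp)
    finally show ?thesis
      by simp
  qed
  have "escaping_chain G E \<rho> \<epsilon> R m xs"
    unfolding escaping_chain_def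
  proof (intro conjI allI impI ballI)
    fix i assume "i \<in> {1..m}"
    then show "\<rho> (xs i) (xs (i - 1)) \<le> \<epsilon> * R"
      using step[of "i - 1"] metric_on_sym[OF \<rho>] in_G \<open>m \<le> n\<close> by auto
    show "E (xs i) (xs (i - 1))"
      using steps \<open>i \<in> {1..m}\<close> \<open>m \<le> n\<close> by auto
  qed (use in_G \<open>m \<le> n\<close> before exit in auto)
  moreover have "1 \<le> m"
    using \<open>m \<noteq> 0\<close> by simp
  ultimately show ?thesis
    using \<open>R > 0\<close> by blast
qed

theorem lemma4p1:
  fixes G :: "'a set" and E :: "'a \<Rightarrow> 'a \<Rightarrow> bool" and d \<rho> :: "'a \<Rightarrow> 'a \<Rightarrow> real"
  assumes "simple_graph G E" and "connected_graph G E"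
    and "metric_on G d" and "metric_on G \<rho>"
    and "quasisymmetric_to G d \<rho>"
    and "fits G E d"
  shows "fits G E \<rho>"
  unfolding fits_iff_escaping_chains
proof (intro conjI allI impI)
  obtain C where "C > 0" and C: "\<forall>x\<in>G. \<forall>y\<in>G. \<forall>z\<in>G. E x y \<and> x \<noteq> z \<longrightarrow> d x y \<le> C * d x z"
    using \<open>fits G E d\<close> unfolding fits_iff_escaping_chains by blast
  obtain K where "K > 0" and
    "\<And>x y z. x \<in> G \<Longrightarrow> y \<in> G \<Longrightarrow> z \<in> G \<Longrightarrow> x \<noteq> z \<Longrightarrow> d x y \<le> C * d x z \<Longrightarrow> \<rho> x y \<le> K * \<rho> x z"
    using quasisymmetric_to_bounded_ratio[OF assms(3-5)] by blast
  with C show "\<exists>K>0. \<forall>x\<in>G. \<forall>y\<in>G. \<forall>z\<in>G. E x y \<and> x \<noteq> z \<longrightarrow> \<rho> x y \<le> K * \<rho> x z"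
    by blast
next
  fix \<epsilon> :: real assume "\<epsilon> > 0"
  then obtain \<eta> where "\<eta> > 0" and small:
    "\<And>x y z. x \<in> G \<Longrightarrow> y \<in> G \<Longrightarrow> z \<in> G \<Longrightarrow> x \<noteq> z \<Longrightarrow> d x y \<le> \<eta> * d x z \<Longrightarrow> \<rho> x y \<le> \<epsilon> / 2 * \<rho> x z"
    using quasisymmetric_to_small_ratio[OF assms(3-5), of "\<epsilon> / 2"] by auto
  then obtain r n xs where "r > 0" and "escaping_chain G E d (\<eta> / 2) r n xs"
    using \<open>fits G E d\<close> unfolding fits_iff_escaping_chains by (meson half_gt_zero)
  then show "\<exists>R>0. \<exists>m\<ge>1. \<exists>xs. escaping_chain G E \<rho> \<epsilon> R m xs"
    using escaping_chain_transfer[OF assms(3,4) _ \<open>\<eta> > 0\<close> _ small] \<open>\<epsilon> > 0\<close> by fastforce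
qed

end
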